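(* Let $(X,\mathcal{B},\mu)$ be a standard probability space and $r\geq2$ an integer. A subset $K$ of $\mathfrak{P}_r$ is precompact in $(\mathfrak{P}_r,\widetilde\rho)$ if and only if the set $\{\mathbf{1}_A\colon A\in\alpha\in K\}$ is precompact in $L^2(\mu)$.
   Context: $\mathfrak{P}_r$ is the set of finite measurable partitions of $X$ with at most $r$ atoms (identified mod $0$). For $\alpha,\beta\in\mathfrak{P}_r$ write $\alpha=\{A_1,\dots,A_r\}$, $\beta=\{B_1,\dots,B_r\}$ (adding empty sets if necessary) and $\widetilde\rho(\alpha,\beta)=\min_{\sigma\in S_r}\sum_{i=1}^r\mu(A_i\triangle B_{\sigma(i)})$, $S_r$ the permutation group of $\{1,\dots,r\}$. *)

theory Defs
  imports "HOL-Probability.Probability" "HOL-Combinatorics.Permutations"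
begin

definition standard_borel_space :: "'a measure \<Rightarrow> bool" where
  "standard_borel_space M \<longleftrightarrow>
     (\<exists>X. completely_metrizable_space X \<and> separable_space X \<and>
          topspace X = space M \<and> sets M = sigma_sets (space M) {U. openin X U})"

definition standard_probability_space :: "'a measure \<Rightarrow> bool" where
  "standard_probability_space M \<longleftrightarrow> prob_space M \<and> standard_borel_space M"

text \<open>Finite measurable partitions of the space with at most r atoms (representatives;
  the identification mod 0 is irrelevant for precompactness).\<close>
definition meas_partitions :: "'a measure \<Rightarrow> nat \<Rightarrow> 'a set set set" where
  "meas_partitions M r = {\<alpha>. finite \<alpha> \<and> card \<alpha> \<le> r \<and> \<alpha> \<subseteq> sets M \<and>
      disjoint \<alpha> \<and> \<Union>\<alpha> = space M}"

definition padded_listing :: "nat \<Rightarrow> 'a set set \<Rightarrow> 'a set list \<Rightarrow> bool" where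
  "padded_listing r \<alpha> as \<longleftrightarrow> length as = r \<and> set as \<subseteq> \<alpha> \<union> {{}} \<and>
      (\<forall>A\<in>\<alpha> - {{}}. count_list as A = 1)"

definition part_list :: "nat \<Rightarrow> 'a set set \<Rightarrow> 'a set list" where
  "part_list r \<alpha> = (SOME as. padded_listing r \<alpha> as)"

definition rho_tilde :: "'a measure \<Rightarrow> nat \<Rightarrow> 'a set set \<Rightarrow> 'a set set \<Rightarrow> real" where
  "rho_tilde M r \<alpha> \<beta> =
     Min {(\<Sum>i<r. measure M ((part_list r \<alpha> ! i - part_list r \<beta> ! \<sigma> i)
                              \<union> (part_list r \<beta> ! \<sigma> i - part_list r \<alpha> ! i))) | \<sigma>.
           \<sigma> permutes {..<r}}"

definition L2_dist :: "'a measure \<Rightarrow> ('a \<Rightarrow> real) \<Rightarrow> ('a \<Rightarrow> real) \<Rightarrow> real" where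
  "L2_dist M f g = sqrt (\<integral>x. (f x - g x)\<^sup>2 \<partial>M)"

text \<open>Precompact = totally bounded with respect to a (pseudo)metric d.\<close>
definition precompact_wrt :: "('b \<Rightarrow> 'b \<Rightarrow> real) \<Rightarrow> 'b set \<Rightarrow> bool" where
  "precompact_wrt d S \<longleftrightarrow>
     (\<forall>e>0. \<exists>F. finite F \<and> F \<subseteq> S \<and> (\<forall>x\<in>S. \<exists>y\<in>F. d x y < e))"

end

theory Submission
  imports Defs
begin

text \<open>
  The \<open>L\<^sup>2\<close> distance of two indicators is \<open>\<surd>\<mu>(A \<triangle> B)\<close>, so the right-hand side says that the
  atoms of the partitions in \<open>K\<close> form a totally bounded family for the pseudometric
  \<open>\<mu>(A \<triangle> B)\<close>. If \<open>\<rho>(\<alpha>, \<beta>) < \<epsilon>\<close>, every nonempty atom of \<open>\<alpha>\<close> is \<open>\<epsilon>\<close>-close to an atom of \<open>\<beta>\<close>,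
  so the atoms of a finite \<open>\<rho>\<close>-net of \<open>K\<close>, together with \<open>\<emptyset>\<close>, form a finite net of atoms.
  Conversely, rounding each of the \<open>r\<close> atoms of \<open>\<alpha>\<close> to a point of a finite \<open>\<delta>\<close>-net of atoms
  yields finitely many \<open>r\<close>-tuples, and two partitions with the same tuple are \<open>2r\<delta>\<close>-close
  already for the identity permutation.
\<close>

lemma precompact_wrtE:
  assumes "precompact_wrt d S" "e > 0"
  obtains F where "finite F" "F \<subseteq> S" "\<forall>x\<in>S. \<exists>y\<in>F. d x y < e"
  using assms(1)[unfolded precompact_wrt_def, rule_format, OF assms(2)] by blast

lemma precompact_wrt_image:
  "precompact_wrt d (f ` S) \<longleftrightarrow> precompact_wrt (\<lambda>x y. d (f x) (f y)) S"
proof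
  assume image: "precompact_wrt d (f ` S)"
  show "precompact_wrt (\<lambda>x y. d (f x) (f y)) S"
    unfolding precompact_wrt_def
  proof (intro allI impI)
    fix e :: real assume "e > 0"
    with image obtain F where F: "finite F" "F \<subseteq> f ` S" "\<forall>x\<in>f ` S. \<exists>y\<in>F. d x y < e"
      by (rule precompact_wrtE)
    then obtain F0 where "F0 \<subseteq> S" "finite F0" "F = f ` F0"
      by (meson finite_subset_image)
    with F show "\<exists>F. finite F \<and> F \<subseteq> S \<and> (\<forall>x\<in>S. \<exists>y\<in>F. d (f x) (f y) < e)"
      by (intro exI[of _ F0]) auto
  qed
next
  assume pullback: "precompact_wrt (\<lambda>x y. d (f x) (f y)) S"
  show "precompact_wrt d (f ` S)"
    unfolding precompact_wrt_def
  proof (intro allI impI)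
    fix e :: real assume "e > 0"
    with pullback obtain F where "finite F" "F \<subseteq> S" "\<forall>x\<in>S. \<exists>y\<in>F. d (f x) (f y) < e"
      by (rule precompact_wrtE)
    then show "\<exists>F. finite F \<and> F \<subseteq> f ` S \<and> (\<forall>x\<in>f ` S. \<exists>y\<in>F. d x y < e)"
      by (intro exI[of _ "f ` F"]) auto
  qed
qed

lemma precompact_wrt_cong:
  assumes "\<And>x y. x \<in> S \<Longrightarrow> y \<in> S \<Longrightarrow> d x y = d' x y"
  shows "precompact_wrt d S \<longleftrightarrow> precompact_wrt d' S"
proof -
  have "(\<forall>x\<in>S. \<exists>y\<in>F. d x y < e) \<longleftrightarrow> (\<forall>x\<in>S. \<exists>y\<in>F. d' x y < e)" if "F \<subseteq> S" for F e
    using that assms by (metis subsetD)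
  then show ?thesis
    unfolding precompact_wrt_def by meson
qed

lemma precompact_wrt_sqrt:
  "precompact_wrt (\<lambda>x y. sqrt (d x y)) S \<longleftrightarrow> precompact_wrt d S"
proof -
  define net where "net e \<longleftrightarrow> (\<exists>F. finite F \<and> F \<subseteq> S \<and> (\<forall>x\<in>S. \<exists>y\<in>F. d x y < e))" for e
  have "sqrt (d x y) < e \<longleftrightarrow> d x y < e\<^sup>2" if "e > 0" for x y and e :: real
    using that real_sqrt_less_iff[of "d x y" "e\<^sup>2"] by simp
  then have "precompact_wrt (\<lambda>x y. sqrt (d x y)) S \<longleftrightarrow> (\<forall>e>0. net (e\<^sup>2))"
    unfolding precompact_wrt_def net_def by (metis (no_types, lifting))
  also have "\<dots> \<longleftrightarrow> (\<forall>e>0. net e)"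
    by (metis real_sqrt_gt_0_iff real_sqrt_pow2 less_eq_real_def zero_less_power)
  finally show ?thesis
    unfolding precompact_wrt_def net_def .
qed

lemma precompact_wrt_insert:
  assumes "precompact_wrt d S" "d a a = 0"
  shows "precompact_wrt d (insert a S)"
  unfolding precompact_wrt_def
proof (intro allI impI)
  fix e :: real assume "e > 0"
  with assms(1) obtain F where "finite F" "F \<subseteq> S" "\<forall>x\<in>S. \<exists>y\<in>F. d x y < e"
    by (rule precompact_wrtE)
  with \<open>e > 0\<close> assms(2) show "\<exists>F. finite F \<and> F \<subseteq> insert a S \<and> (\<forall>x\<in>insert a S. \<exists>y\<in>F. d x y < e)"
    by (intro exI[of _ "insert a F"]) auto
qed

lemma precompact_wrt_external_net:
  assumes sym: "\<And>x y. x \<in> T \<Longrightarrow> y \<in> T \<Longrightarrow> d x y = d y x"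
    and triangle: "\<And>x y z. x \<in> T \<Longrightarrow> y \<in> T \<Longrightarrow> z \<in> T \<Longrightarrow> d x z \<le> d x y + d y z"
    and "S \<subseteq> T"
    and nets: "\<And>e. e > 0 \<Longrightarrow> \<exists>G. finite G \<and> G \<subseteq> T \<and> (\<forall>x\<in>S. \<exists>y\<in>G. d x y < e)"
  shows "precompact_wrt d S"
  unfolding precompact_wrt_def
proof (intro allI impI)
  fix e :: real assume "e > 0"
  then obtain G where G: "finite G" "G \<subseteq> T" "\<forall>x\<in>S. \<exists>y\<in>G. d x y < e/2"
    using nets[of "e/2"] by auto
  define G' where "G' = {y\<in>G. \<exists>x\<in>S. d x y < e/2}"
  have "\<forall>y\<in>G'. \<exists>x. x \<in> S \<and> d x y < e/2"
    unfolding G'_def by blast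
  then obtain p where p: "\<And>y. y \<in> G' \<Longrightarrow> p y \<in> S \<and> d (p y) y < e/2"
    by (metis bchoice)
  show "\<exists>F. finite F \<and> F \<subseteq> S \<and> (\<forall>x\<in>S. \<exists>y\<in>F. d x y < e)"
  proof (intro exI[of _ "p ` G'"] conjI ballI)
    show "finite (p ` G')"
      using G(1) unfolding G'_def by simp
    show "p ` G' \<subseteq> S"
      using p by auto
    fix x assume "x \<in> S"
    then obtain y where y: "y \<in> G" "d x y < e/2"
      using G(3) by auto
    with \<open>x \<in> S\<close> have "y \<in> G'"
      unfolding G'_def by auto
    have "x \<in> T" "y \<in> T" "p y \<in> T"
      using \<open>x \<in> S\<close> y(1) p[OF \<open>y \<in> G'\<close>] G(2) \<open>S \<subseteq> T\<close> by auto
    then have "d x (p y) \<le> d x y + d (p y) y"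
      using triangle sym by metis
    also have "\<dots> < e"
      using y(2) p[OF \<open>y \<in> G'\<close>] by simp
    finally show "\<exists>z\<in>p ` G'. d x z < e"
      using \<open>y \<in> G'\<close> by auto
  qed
qed

lemma finite_image_representatives:
  assumes "finite (f ` K)"
  obtains F where "finite F" "F \<subseteq> K" "\<And>x. x \<in> K \<Longrightarrow> \<exists>y\<in>F. f y = f x"
proof
  show "finite (inv_into K f ` f ` K)"
    using assms by simp
  show "inv_into K f ` f ` K \<subseteq> K"
    by (auto intro: inv_into_into)
  show "\<exists>y\<in>inv_into K f ` f ` K. f y = f x" if "x \<in> K" for x
    using that by (auto intro: f_inv_into_f)
qed

text \<open>Points of \<open>K\<close> whose coordinates round to the same tuple of points of a finite
  \<open>\<delta>\<close>-net of \<open>S\<close> are \<open>2n\<delta>\<close>-close for \<open>d\<close>, and there are only finitely many such tuples.\<close>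
lemma precompact_wrt_sum_dominated:
  fixes D :: "'a \<Rightarrow> 'a \<Rightarrow> real" and n :: nat
  assumes sym: "\<And>x y. x \<in> S \<Longrightarrow> y \<in> S \<Longrightarrow> D x y = D y x"
    and triangle: "\<And>x y z. x \<in> S \<Longrightarrow> y \<in> S \<Longrightarrow> z \<in> S \<Longrightarrow> D x z \<le> D x y + D y z"
    and "precompact_wrt D S"
    and coords: "\<And>i x. i < n \<Longrightarrow> x \<in> K \<Longrightarrow> g i x \<in> S"
    and dominated: "\<And>x y. x \<in> K \<Longrightarrow> y \<in> K \<Longrightarrow> d x y \<le> (\<Sum>i<n. D (g i x) (g i y))"
  shows "precompact_wrt d K"
  unfolding precompact_wrt_def
proof (intro allI impI)
  fix e :: real assume "e > 0"
  define \<delta> where "\<delta> = e / (2 * n + 1)"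
  have "\<delta> > 0" "2 * n * \<delta> < e"
    using \<open>e > 0\<close> by (simp_all add: \<delta>_def field_simps)
  obtain G where G: "finite G" "G \<subseteq> S" "\<forall>z\<in>S. \<exists>c\<in>G. D z c < \<delta>"
    using assms(3) \<open>\<delta> > 0\<close> by (rule precompact_wrtE)
  define c where "c x i = (SOME c. c \<in> G \<and> D (g i x) c < \<delta>)" for x i
  have c: "c x i \<in> G \<and> D (g i x) (c x i) < \<delta>" if "x \<in> K" "i < n" for x i
    unfolding c_def by (rule someI_ex) (use G(3) coords[OF that(2,1)] in blast)
  have "restrict (c x) {..<n} \<in> {..<n} \<rightarrow>\<^sub>E G" if "x \<in> K" for x
    unfolding restrict_PiE using c[OF that] by auto
  then have "finite ((\<lambda>x. restrict (c x) {..<n}) ` K)"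
    using G(1) by (blast intro: finite_subset finite_PiE)
  then obtain F where F: "finite F" "F \<subseteq> K"
    and same_tuple: "\<And>x. x \<in> K \<Longrightarrow> \<exists>y\<in>F. restrict (c y) {..<n} = restrict (c x) {..<n}"
    by (rule finite_image_representatives) blast
  have "\<exists>y\<in>F. d x y < e" if "x \<in> K" for x
  proof -
    obtain y where "y \<in> F" and tuple: "restrict (c y) {..<n} = restrict (c x) {..<n}"
      using same_tuple[OF \<open>x \<in> K\<close>] by blast
    have "y \<in> K"
      using \<open>y \<in> F\<close> F(2) by blast
    have same: "c y i = c x i" if "i < n" for i
      using fun_cong[OF tuple, of i] that by simp
    have "d x y \<le> (\<Sum>i<n. D (g i x) (g i y))"
      using dominated \<open>x \<in> K\<close> \<open>y \<in> K\<close> .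
    also have "\<dots> \<le> (\<Sum>i<n. D (g i x) (c x i) + D (g i y) (c y i))"
    proof (rule sum_mono)
      fix i assume "i \<in> {..<n}"
      then have "g i x \<in> S" "g i y \<in> S" "c x i \<in> S" "c y i = c x i"
        using coords c \<open>x \<in> K\<close> \<open>y \<in> K\<close> G(2) same by auto
      then show "D (g i x) (g i y) \<le> D (g i x) (c x i) + D (g i y) (c y i)"
        using triangle sym by metis
    qed
    also have "\<dots> \<le> (\<Sum>i<n. 2 * \<delta>)"
    proof (rule sum_mono)
      fix i assume "i \<in> {..<n}"
      then show "D (g i x) (c x i) + D (g i y) (c y i) \<le> 2 * \<delta>"
        using c[OF \<open>x \<in> K\<close>, of i] c[OF \<open>y \<in> K\<close>, of i] by simp
    qed
    also have "\<dots> < e"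
      using \<open>2 * n * \<delta> < e\<close> by simp
    finally show ?thesis
      using \<open>y \<in> F\<close> by blast
  qed
  with F show "\<exists>F. finite F \<and> F \<subseteq> K \<and> (\<forall>x\<in>K. \<exists>y\<in>F. d x y < e)"
    by blast
qed

lemma measure_sym_diff_commute: "measure M (sym_diff A B) = measure M (sym_diff B A)"
  by (simp add: Un_commute)

lemma measure_sym_diff_triangle:
  assumes "finite_measure M" "A \<in> sets M" "B \<in> sets M" "C \<in> sets M"
  shows "measure M (sym_diff A C) \<le> measure M (sym_diff A B) + measure M (sym_diff B C)"
proof -
  interpret finite_measure M by fact
  have "measure M (sym_diff A C) \<le> measure M (sym_diff A B \<union> sym_diff B C)"
    using assms by (intro finite_measure_mono) auto
  also have "\<dots> \<le> measure M (sym_diff A B) + measure M (sym_diff B C)"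
    using assms by (intro measure_Un_le) auto
  finally show ?thesis .
qed

lemma L2_dist_indicator:
  assumes "A \<in> sets M" "B \<in> sets M"
  shows "L2_dist M (indicator A) (indicator B) = sqrt (measure M (sym_diff A B))"
proof -
  have "(\<lambda>x. (indicator A x - indicator B x :: real)\<^sup>2) = indicator (sym_diff A B)"
    by (auto simp: indicator_def)
  moreover have "sym_diff A B \<inter> space M = sym_diff A B"
    using assms sets.sets_into_space by blast
  ultimately show ?thesis
    unfolding L2_dist_def by simp
qed

lemma precompact_wrt_L2_dist_indicators_iff:
  assumes "S \<subseteq> sets M"
  shows "precompact_wrt (L2_dist M) ((\<lambda>A. indicator A :: 'a \<Rightarrow> real) ` S) \<longleftrightarrow>
    precompact_wrt (\<lambda>A B. measure M (sym_diff A B)) S"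
proof -
  have "precompact_wrt (L2_dist M) ((\<lambda>A. indicator A :: 'a \<Rightarrow> real) ` S) \<longleftrightarrow>
      precompact_wrt (\<lambda>A B. sqrt (measure M (sym_diff A B))) S"
    unfolding precompact_wrt_image using assms by (intro precompact_wrt_cong L2_dist_indicator) auto
  then show ?thesis
    by (simp only: precompact_wrt_sqrt)
qed

lemma count_list_distinct: "distinct xs \<Longrightarrow> x \<in> set xs \<Longrightarrow> count_list xs x = 1"
  by (induction xs) auto

lemma padded_listing_part_list:
  assumes "finite \<alpha>" "card \<alpha> \<le> r"
  shows "padded_listing r \<alpha> (part_list r \<alpha>)"
proof -
  obtain xs where xs: "set xs = \<alpha> - {{}}" "distinct xs"
    using finite_distinct_list[OF finite_Diff[OF assms(1)]] by blast
  have "length xs = card (\<alpha> - {{}})"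
    using distinct_card[OF xs(2)] xs(1) by simp
  also have "\<dots> \<le> card \<alpha>"
    using assms(1) by (intro card_mono) auto
  finally have "length xs \<le> r"
    using assms(2) by linarith
  moreover have "count_list (xs @ replicate (r - length xs) {}) A = 1" if "A \<in> \<alpha> - {{}}" for A
    using that xs by (simp add: count_list_distinct)
  ultimately have "padded_listing r \<alpha> (xs @ replicate (r - length xs) {})"
    unfolding padded_listing_def using xs(1) by auto
  then show ?thesis
    unfolding part_list_def by (rule someI)
qed

lemma padded_listing_part_list_partition:
  "\<alpha> \<in> meas_partitions M r \<Longrightarrow> padded_listing r \<alpha> (part_list r \<alpha>)"
  by (intro padded_listing_part_list) (auto simp: meas_partitions_def)

lemma length_part_list:
  assumes "\<alpha> \<in> meas_partitions M r"
  shows "length (part_list r \<alpha>) = r"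
  using padded_listing_part_list_partition[OF assms] by (simp add: padded_listing_def)

lemma set_part_list:
  assumes "\<alpha> \<in> meas_partitions M r"
  shows "set (part_list r \<alpha>) \<subseteq> insert {} \<alpha>"
  using padded_listing_part_list_partition[OF assms] by (simp add: padded_listing_def)

lemma set_part_list_sets:
  assumes "\<alpha> \<in> meas_partitions M r"
  shows "set (part_list r \<alpha>) \<subseteq> sets M"
  using set_part_list[OF assms] assms by (auto simp: meas_partitions_def)

lemma in_set_part_list:
  assumes "\<alpha> \<in> meas_partitions M r" "A \<in> \<alpha>" "A \<noteq> {}"
  shows "A \<in> set (part_list r \<alpha>)"
proof -
  have "count_list (part_list r \<alpha>) A = 1"
    using padded_listing_part_list_partition[OF assms(1)] assms(2,3) by (simp add: padded_listing_def)
  then show ?thesis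
    by (metis count_notin zero_neq_one)
qed

lemma rho_tilde_le:
  assumes "\<sigma> permutes {..<r}"
  shows "rho_tilde M r \<alpha> \<beta> \<le>
    (\<Sum>i<r. measure M (sym_diff (part_list r \<alpha> ! i) (part_list r \<beta> ! \<sigma> i)))"
  unfolding rho_tilde_def using assms
  by (intro Min_le) (auto simp: finite_image_set finite_permutations)

lemma rho_tilde_attained:
  obtains \<sigma> where "\<sigma> permutes {..<r}"
    and "rho_tilde M r \<alpha> \<beta> = (\<Sum>i<r. measure M (sym_diff (part_list r \<alpha> ! i) (part_list r \<beta> ! \<sigma> i)))"
proof -
  have "rho_tilde M r \<alpha> \<beta> \<in> {(\<Sum>i<r. measure M (sym_diff (part_list r \<alpha> ! i) (part_list r \<beta> ! \<sigma> i))) | \<sigma>.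
      \<sigma> permutes {..<r}}"
    unfolding rho_tilde_def
    by (rule Min_in) (auto simp: finite_image_set finite_permutations intro: permutes_id)
  with that show ?thesis
    by blast
qed

lemma atom_near_part_list:
  assumes "\<alpha> \<in> meas_partitions M r" "\<beta> \<in> meas_partitions M r" "A \<in> \<alpha>" "A \<noteq> {}"
  shows "\<exists>B\<in>set (part_list r \<beta>). measure M (sym_diff A B) \<le> rho_tilde M r \<alpha> \<beta>"
proof -
  obtain i where "i < r" "part_list r \<alpha> ! i = A"
    using in_set_part_list[OF assms(1,3,4)] length_part_list[OF assms(1)] by (metis in_set_conv_nth)
  obtain \<sigma> where "\<sigma> permutes {..<r}"
    and rho: "rho_tilde M r \<alpha> \<beta> = (\<Sum>i<r. measure M (sym_diff (part_list r \<alpha> ! i) (part_list r \<beta> ! \<sigma> i)))"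
    by (rule rho_tilde_attained)
  have "\<sigma> i < r"
    using permutes_in_image[OF \<open>\<sigma> permutes {..<r}\<close>, of i] \<open>i < r\<close> by simp
  then have "part_list r \<beta> ! \<sigma> i \<in> set (part_list r \<beta>)"
    using length_part_list[OF assms(2)] by simp
  moreover have "measure M (sym_diff (part_list r \<alpha> ! i) (part_list r \<beta> ! \<sigma> i)) \<le> rho_tilde M r \<alpha> \<beta>"
    unfolding rho using \<open>i < r\<close> by (intro member_le_sum) auto
  ultimately show ?thesis
    using \<open>part_list r \<alpha> ! i = A\<close> by blast
qed

lemma precompact_atoms_if_precompact_partitions:
  assumes "finite_measure M" "K \<subseteq> meas_partitions M r" "precompact_wrt (rho_tilde M r) K"
  shows "precompact_wrt (\<lambda>A B. measure M (sym_diff A B)) (\<Union>K)"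
proof (rule precompact_wrt_external_net[where T = "sets M"])
  show "\<Union>K \<subseteq> sets M"
    using assms(2) by (auto simp: meas_partitions_def)
  fix e :: real assume "e > 0"
  with assms(3) obtain F where F: "finite F" "F \<subseteq> K" "\<forall>\<alpha>\<in>K. \<exists>\<beta>\<in>F. rho_tilde M r \<alpha> \<beta> < e"
    by (rule precompact_wrtE)
  define G where "G = insert {} (\<Union>\<beta>\<in>F. set (part_list r \<beta>))"
  have "finite G"
    using F(1) by (simp add: G_def)
  moreover have "G \<subseteq> sets M"
    using F(2) assms(2) set_part_list_sets by (fastforce simp: G_def)
  moreover have "\<exists>B\<in>G. measure M (sym_diff A B) < e" if "A \<in> \<Union>K" for A
  proof (cases "A = {}")
    case True
    then show ?thesis
      using \<open>e > 0\<close> by (simp add: G_def)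
  next
    case False
    from that obtain \<alpha> where "\<alpha> \<in> K" "A \<in> \<alpha>"
      by blast
    with F(3) obtain \<beta> where "\<beta> \<in> F" "rho_tilde M r \<alpha> \<beta> < e"
      by blast
    moreover obtain B where "B \<in> set (part_list r \<beta>)" "measure M (sym_diff A B) \<le> rho_tilde M r \<alpha> \<beta>"
      using atom_near_part_list[of \<alpha> M r \<beta> A] \<open>\<alpha> \<in> K\<close> \<open>\<beta> \<in> F\<close> \<open>A \<in> \<alpha>\<close> False F(2) assms(2) by blast
    ultimately show ?thesis
      unfolding G_def by fastforce
  qed
  ultimately show "\<exists>G. finite G \<and> G \<subseteq> sets M \<and> (\<forall>A\<in>\<Union>K. \<exists>B\<in>G. measure M (sym_diff A B) < e)"
    by blast
qed (use measure_sym_diff_commute measure_sym_diff_triangle[OF assms(1)] in auto)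

lemma precompact_partitions_if_precompact_atoms:
  assumes "finite_measure M" "K \<subseteq> meas_partitions M r"
    and "precompact_wrt (\<lambda>A B. measure M (sym_diff A B)) (\<Union>K)"
  shows "precompact_wrt (rho_tilde M r) K"
proof (rule precompact_wrt_sum_dominated[where S = "insert {} (\<Union>K)"
      and D = "\<lambda>A B. measure M (sym_diff A B)" and n = r and g = "\<lambda>i \<alpha>. part_list r \<alpha> ! i"])
  have "insert {} (\<Union>K) \<subseteq> sets M"
    using assms(2) by (auto simp: meas_partitions_def)
  then show "measure M (sym_diff A C) \<le> measure M (sym_diff A B) + measure M (sym_diff B C)"
    if "A \<in> insert {} (\<Union>K)" "B \<in> insert {} (\<Union>K)" "C \<in> insert {} (\<Union>K)" for A B C
    using that measure_sym_diff_triangle[OF assms(1)] by blast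
  show "precompact_wrt (\<lambda>A B. measure M (sym_diff A B)) (insert {} (\<Union>K))"
    using assms(3) by (rule precompact_wrt_insert) simp
  show "part_list r \<alpha> ! i \<in> insert {} (\<Union>K)" if "i < r" "\<alpha> \<in> K" for i \<alpha>
  proof -
    have "\<alpha> \<in> meas_partitions M r"
      using that(2) assms(2) by blast
    then have "part_list r \<alpha> ! i \<in> set (part_list r \<alpha>)"
      using that(1) by (simp add: length_part_list)
    then show ?thesis
      using set_part_list[OF \<open>\<alpha> \<in> meas_partitions M r\<close>] that(2) by blast
  qed
  show "rho_tilde M r \<alpha> \<beta> \<le> (\<Sum>i<r. measure M (sym_diff (part_list r \<alpha> ! i) (part_list r \<beta> ! i)))" for \<alpha> \<beta>
    using rho_tilde_le[OF permutes_id] by simp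
qed (rule measure_sym_diff_commute)

theorem proposition3p2:
  fixes M :: "'a measure" and r :: nat and K :: "'a set set set"
  assumes "standard_probability_space M"
    and "r \<ge> 2"
    and "K \<subseteq> meas_partitions M r"
  shows "precompact_wrt (rho_tilde M r) K \<longleftrightarrow>
         precompact_wrt (L2_dist M) {(indicator A :: 'a \<Rightarrow> real) | A \<alpha>. \<alpha> \<in> K \<and> A \<in> \<alpha>}"
proof -
  have "finite_measure M"
    using assms(1) unfolding standard_probability_space_def by (auto intro: prob_space.finite_measure)
  have atoms: "{(indicator A :: 'a \<Rightarrow> real) | A \<alpha>. \<alpha> \<in> K \<and> A \<in> \<alpha>} = (\<lambda>A. indicator A) ` \<Union>K"
    by blast
  have "\<Union>K \<subseteq> sets M"
    using assms(3) by (auto simp: meas_partitions_def)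
  then have "precompact_wrt (L2_dist M) {(indicator A :: 'a \<Rightarrow> real) | A \<alpha>. \<alpha> \<in> K \<and> A \<in> \<alpha>} \<longleftrightarrow>
      precompact_wrt (\<lambda>A B. measure M (sym_diff A B)) (\<Union>K)"
    unfolding atoms by (rule precompact_wrt_L2_dist_indicators_iff)
  with \<open>finite_measure M\<close> assms(3) show ?thesis
    using precompact_atoms_if_precompact_partitions precompact_partitions_if_precompact_atoms by blast
qed

end
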